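(* For each $n\ge1$, the natural truncation map $\pi_n:\mathfrak{krv}^{(n+1)}\to\mathfrak{krv}^{(n)}$ is a surjective Lie algebra homomorphism.
   Context: Let $\mathbb{L}$ be the degree completion of the free Lie algebra over $\mathbb{C}$ on $x,y$ (degree = number of letters), $\mathsf{A}$ the degree-completed free associative algebra on $x,y$, $\mathrm{cyc}=\mathsf{A}/[\mathsf{A},\mathsf{A}]$ (quotient by the span of $ab-ba$) with quotient map $\mathrm{tr}$. For $n\ge1$, $\mathbb{L}_{\le n}$, $\mathsf{A}_{\le n}$, $\mathrm{cyc}_{\le n}$ denote quotients by elements of degree $\ge n+1$. $\mathfrak{tder}_{\le n}$ is the Lie algebra (under commutator) of tangential derivations of $\mathbb{L}_{\le n}$: Lie derivations $u$ with $u(x)=[x,u_1]$, $u(y)=[y,u_2]$ for some $u_1,u_2\in\mathbb{L}_{\le n}$, written $u=(u_1,u_2)$. Writing $a=a_0+\partial_x(a)x+\partial_y(a)y$ uniquely, the divergence is $j(u)=\mathrm{tr}(\partial_x(u_1)x+\partial_y(u_2)y)\in\mathrm{cyc}_{\le n}$. The projections $\pi_n:\mathfrak{tder}_{\le n+1}\to\mathfrak{tder}_{\le n}$ are induced by $\mathbb{L}_{\le n+1}\to\mathbb{L}_{\le n}$. $\mathfrak{krv}^{(n)}$ is the Lie subalgebra of $u\in\mathfrak{tder}_{\le n}$ for which $u(x+y)=0$ in $\mathbb{L}_{\le n}$ and there exists $r\in\mathbb{C}[[z]]/z^{n+1}$ with $j(u)=\mathrm{tr}(r(x+y)-r(x)-r(y))$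 in $\mathrm{cyc}_{\le n}$. *)

theory Defs
  imports Complex_Main
begin

datatype gen = X | Y

text \<open>An element of the degree-completed free associative algebra A is an arbitrary
  formal series, i.e. a function from words to coefficients.\<close>
type_synonym ser = "gen list \<Rightarrow> complex"

definition szero :: ser where "szero = (\<lambda>w. 0)"
definition sadd :: "ser \<Rightarrow> ser \<Rightarrow> ser" where "sadd a b = (\<lambda>w. a w + b w)"
definition ssub :: "ser \<Rightarrow> ser \<Rightarrow> ser" where "ssub a b = (\<lambda>w. a w - b w)"
definition ssc :: "complex \<Rightarrow> ser \<Rightarrow> ser" where "ssc c a = (\<lambda>w. c * a w)"

definition smul :: "ser \<Rightarrow> ser \<Rightarrow> ser" where
  "smul a b = (\<lambda>w. \<Sum>k\<in>{..length w}. a (take k w) * b (drop k w))"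

definition sone :: ser where "sone = (\<lambda>w. if w = [] then 1 else 0)"

primrec spow :: "ser \<Rightarrow> nat \<Rightarrow> ser" where
  "spow a 0 = sone"
| "spow a (Suc k) = smul a (spow a k)"

definition sbr :: "ser \<Rightarrow> ser \<Rightarrow> ser" where "sbr a b = ssub (smul a b) (smul b a)"

definition sgen :: "gen \<Rightarrow> ser" where "sgen g = (\<lambda>w. if w = [g] then 1 else 0)"

text \<open>Truncation: quotient by elements of degree \<ge> n+1 (canonical representative).\<close>
definition trunc :: "nat \<Rightarrow> ser \<Rightarrow> ser" where
  "trunc n a = (\<lambda>w. if length w \<le> n then a w else 0)"

text \<open>Lie polynomials: the Lie subalgebra of A generated by x and y (the free Lie algebra
  on x, y, embedded in the free associative algebra).\<close>
inductive_set liepoly :: "ser set" where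
  gen: "sgen g \<in> liepoly"
| add: "a \<in> liepoly \<Longrightarrow> b \<in> liepoly \<Longrightarrow> sadd a b \<in> liepoly"
| scal: "a \<in> liepoly \<Longrightarrow> ssc c a \<in> liepoly"
| br: "a \<in> liepoly \<Longrightarrow> b \<in> liepoly \<Longrightarrow> sbr a b \<in> liepoly"

text \<open>L_{\<le>n}: Lie elements of degree \<le> n (canonical representatives of L / degree \<ge> n+1).\<close>
definition L_le :: "nat \<Rightarrow> ser set" where
  "L_le n = {a \<in> liepoly. \<forall>w. n < length w \<longrightarrow> a w = 0}"

text \<open>By convention it is zero
  outside L_{\<le>n} (extensionality), so that equal derivations are equal functions.\<close>
definition is_tang :: "nat \<Rightarrow> (ser \<Rightarrow> ser) \<Rightarrow> ser \<Rightarrow> ser \<Rightarrow> bool" where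
  "is_tang n D u1 u2 \<longleftrightarrow> u1 \<in> L_le n \<and> u2 \<in> L_le n \<and>
     D (sgen X) = trunc n (sbr (sgen X) u1) \<and> D (sgen Y) = trunc n (sbr (sgen Y) u2)"

definition tder :: "nat \<Rightarrow> (ser \<Rightarrow> ser) set" where
  "tder n = {D.
     (\<forall>f. f \<notin> L_le n \<longrightarrow> D f = szero) \<and>
     (\<forall>f\<in>L_le n. D f \<in> L_le n) \<and>
     (\<forall>f\<in>L_le n. \<forall>g\<in>L_le n. D (sadd f g) = sadd (D f) (D g)) \<and>
     (\<forall>f\<in>L_le n. \<forall>c. D (ssc c f) = ssc c (D f)) \<and>
     (\<forall>f\<in>L_le n. \<forall>g\<in>L_le n.
        D (trunc n (sbr f g)) = trunc n (sadd (sbr (D f) g) (sbr f (D g)))) \<and>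
     (\<exists>u1 u2. is_tang n D u1 u2)}"

definition dcomm :: "(ser \<Rightarrow> ser) \<Rightarrow> (ser \<Rightarrow> ser) \<Rightarrow> ser \<Rightarrow> ser" where
  "dcomm D E = (\<lambda>f. ssub (D (E f)) (E (D f)))"
definition dadd :: "(ser \<Rightarrow> ser) \<Rightarrow> (ser \<Rightarrow> ser) \<Rightarrow> ser \<Rightarrow> ser" where
  "dadd D E = (\<lambda>f. sadd (D f) (E f))"
definition dsc :: "complex \<Rightarrow> (ser \<Rightarrow> ser) \<Rightarrow> ser \<Rightarrow> ser" where
  "dsc c D = (\<lambda>f. ssc c (D f))"

text \<open>The projection pi_n : tder_{\<le>n+1} \<rightarrow> tder_{\<le>n} induced by L_{\<le>n+1} \<rightarrow> L_{\<le>n}: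
  an element f of L_{\<le>n} is lifted to itself in L_{\<le>n+1}, D is applied, and the
  result is reduced modulo degree \<ge> n+1.\<close>
definition proj :: "nat \<Rightarrow> (ser \<Rightarrow> ser) \<Rightarrow> ser \<Rightarrow> ser" where
  "proj n D = (\<lambda>f. if f \<in> L_le n then trunc n (D f) else szero)"

text \<open>a = a_0 + \<partial>_x(a) x + \<partial>_y(a) y.\<close>
definition dpart :: "gen \<Rightarrow> ser \<Rightarrow> ser" where "dpart g a = (\<lambda>w. a (w @ [g]))"

definition jdiv :: "ser \<Rightarrow> ser \<Rightarrow> ser" where
  "jdiv u1 u2 = sadd (smul (dpart X u1) (sgen X)) (smul (dpart Y u2) (sgen Y))"

inductive_set comm_sub :: "nat \<Rightarrow> ser set" for n where
  zero: "szero \<in> comm_sub n"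
| comm: "trunc n (sbr p q) \<in> comm_sub n"
| add: "a \<in> comm_sub n \<Longrightarrow> b \<in> comm_sub n \<Longrightarrow> sadd a b \<in> comm_sub n"
| scal: "a \<in> comm_sub n \<Longrightarrow> ssc c a \<in> comm_sub n"

text \<open>tr(a) = tr(b) in cyc_{\<le>n} = A_{\<le>n}/[A_{\<le>n},A_{\<le>n}].\<close>
definition cyc_eq :: "nat \<Rightarrow> ser \<Rightarrow> ser \<Rightarrow> bool" where
  "cyc_eq n a b \<longleftrightarrow> trunc n (ssub a b) \<in> comm_sub n"

text \<open>Evaluation of r = \<Sum>_{k\<le>n} r_k z^k \<in> \<complex>[[z]]/z^{n+1} at a series s.\<close>
definition reval :: "nat \<Rightarrow> (nat \<Rightarrow> complex) \<Rightarrow> ser \<Rightarrow> ser" where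
  "reval n r s = (\<lambda>w. \<Sum>k\<le>n. r k * spow s k w)"

definition krv :: "nat \<Rightarrow> (ser \<Rightarrow> ser) set" where
  "krv n = {D \<in> tder n.
     D (sadd (sgen X) (sgen Y)) = szero \<and>
     (\<exists>u1 u2 r. is_tang n D u1 u2 \<and>
        cyc_eq n (jdiv u1 u2)
          (ssub (ssub (reval n r (sadd (sgen X) (sgen Y))) (reval n r (sgen X)))
                (reval n r (sgen Y))))}"

end

theory Submission
  imports Defs
begin

(*
  For m >= 1 a tangential derivation of L_{<=m} is determined by its values on x and y, so it
  is the truncation to degree m of the derivation of the completed free associative algebra
  sending x to [x,u1] and y to [y,u2]; projecting to degree n truncates the same derivation one
  degree lower. Hence pi_n respects brackets and linear combinations, and it maps krv^(n+1) into
  krv^(n) because truncation maps commutators to commutators.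

  Conversely, an element of krv^(n) given by (u1, u2, r) is the projection of the derivation of
  L_{<=n+1} built from the parts of u1, u2 of degree < n, with r cut off below degree n. These
  parts already determine the derivation on L_{<=n}; [x,u1] + [y,u2] then has degree <= n, so
  x + y is still killed; and the divergence condition in degrees <= n+1 reduces to its part in
  degrees < n, which holds by assumption.
*)

lemma sadd_apply: "sadd a b w = a w + b w" by (simp add: sadd_def)
lemma ssub_apply: "ssub a b w = a w - b w" by (simp add: ssub_def)
lemma ssc_apply: "ssc c a w = c * a w" by (simp add: ssc_def)
lemma szero_apply: "szero w = 0" by (simp add: szero_def)

lemmas ser_apply = sadd_apply ssub_apply ssc_apply szero_apply

definition lquot :: "gen \<Rightarrow> ser \<Rightarrow> ser" where
  "lquot h a = (\<lambda>w. a (h # w))"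

lemma lquot_apply: "lquot h a w = a (h # w)"
  by (simp add: lquot_def)

lemma lquot_sadd: "lquot h (sadd a b) = sadd (lquot h a) (lquot h b)"
  by (rule ext) (simp add: lquot_def ser_apply)
lemma lquot_ssc: "lquot h (ssc c a) = ssc c (lquot h a)"
  by (rule ext) (simp add: lquot_def ser_apply)
lemma lquot_szero: "lquot h szero = szero"
  by (rule ext) (simp add: lquot_def ser_apply)

lemma smul_Nil: "smul a b [] = a [] * b []"
  by (simp add: smul_def)

lemma smul_Cons: "smul a b (h # w) = a [] * b (h # w) + smul (lquot h a) b w"
  unfolding smul_def lquot_def by (simp add: sum.atMost_Suc_shift del: sum.atMost_Suc)

lemma lquot_smul: "lquot h (smul a b) = sadd (smul (lquot h a) b) (ssc (a []) (lquot h b))"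
  by (rule ext) (simp add: smul_Cons lquot_apply ser_apply)

lemma smul_sadd_left: "smul (sadd a b) c = sadd (smul a c) (smul b c)"
  by (rule ext) (simp add: smul_def sum.distrib algebra_simps ser_apply)
lemma smul_sadd_right: "smul a (sadd b c) = sadd (smul a b) (smul a c)"
  by (rule ext) (simp add: smul_def sum.distrib algebra_simps ser_apply)
lemma smul_ssc_left: "smul (ssc k a) c = ssc k (smul a c)"
  by (rule ext) (simp add: smul_def sum_distrib_left algebra_simps ser_apply)
lemma smul_ssc_right: "smul a (ssc k c) = ssc k (smul a c)"
  by (rule ext) (simp add: smul_def sum_distrib_left algebra_simps ser_apply)
lemma smul_szero_left: "smul szero c = szero"
  by (rule ext) (simp add: smul_def ser_apply)
lemma smul_szero_right: "smul c szero = szero"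
  by (rule ext) (simp add: smul_def ser_apply)

lemma smul_sone_right: "smul a sone = a"
  by (rule ext) (simp add: smul_def sone_def if_distrib[where f="\<lambda>t. _ * t"]
      sum.delta'[where a="length _"] eq_commute[of "length _"] cong: if_cong)

lemma smul_assoc: "smul (smul a b) c = smul a (smul b c)"
proof (rule ext)
  show "smul (smul a b) c w = smul a (smul b c) w" for w
  proof (induction w arbitrary: a b c)
    case Nil
    then show ?case by (simp add: smul_Nil)
  next
    case (Cons h w)
    show ?case
      by (simp only: smul_Cons smul_Nil lquot_smul smul_sadd_left smul_ssc_left)
        (simp add: Cons.IH ser_apply algebra_simps)
  qed
qed

lemma trunc_apply: "trunc n a w = (if length w \<le> n then a w else 0)"
  by (simp add: trunc_def)

lemma trunc_trunc: "trunc m (trunc n a) = trunc (min m n) a"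
  by (rule ext) (simp add: trunc_apply)
lemma trunc_sadd: "trunc n (sadd a b) = sadd (trunc n a) (trunc n b)"
  by (rule ext) (simp add: trunc_apply ser_apply)
lemma trunc_ssub: "trunc n (ssub a b) = ssub (trunc n a) (trunc n b)"
  by (rule ext) (simp add: trunc_apply ser_apply)
lemma trunc_ssc: "trunc n (ssc c a) = ssc c (trunc n a)"
  by (rule ext) (simp add: trunc_apply ser_apply)
lemma trunc_szero: "trunc n szero = szero"
  by (rule ext) (simp add: trunc_apply szero_apply)

lemma trunc_smul: "trunc n (smul (trunc n a) (trunc n b)) = trunc n (smul a b)"
  by (rule ext) (auto simp: trunc_apply smul_def intro!: sum.cong)

lemma trunc_smul_left: "trunc n (smul (trunc n a) b) = trunc n (smul a b)"
  by (metis trunc_smul trunc_trunc min.idem)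
lemma trunc_smul_right: "trunc n (smul a (trunc n b)) = trunc n (smul a b)"
  by (metis trunc_smul trunc_trunc min.idem)

lemma trunc_sbr_left: "trunc n (sbr (trunc n a) b) = trunc n (sbr a b)"
  unfolding sbr_def trunc_ssub trunc_smul_left trunc_smul_right ..
lemma trunc_sbr_right: "trunc n (sbr a (trunc n b)) = trunc n (sbr a b)"
  unfolding sbr_def trunc_ssub trunc_smul_left trunc_smul_right ..
lemma trunc_sbr: "trunc n (sbr (trunc n a) (trunc n b)) = trunc n (sbr a b)"
  by (simp add: trunc_sbr_left trunc_sbr_right)

lemma trunc_sgen: "1 \<le> m \<Longrightarrow> trunc m (sgen g) = sgen g"
  by (rule ext) (auto simp: trunc_apply sgen_def)

definition shom :: "nat \<Rightarrow> ser \<Rightarrow> ser" where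
  "shom j a = (\<lambda>w. if length w = j then a w else 0)"

lemma shom_sadd: "shom j (sadd a b) = sadd (shom j a) (shom j b)"
  by (rule ext) (simp add: shom_def sadd_apply)

lemma shom_ssc: "shom j (ssc c a) = ssc c (shom j a)"
  by (rule ext) (simp add: shom_def ssc_apply)

lemma shom_sgen: "shom 1 (sgen g) = sgen g"
  by (rule ext) (simp add: shom_def sgen_def)

lemma shom_fixed_length: "shom i a = a \<Longrightarrow> a v \<noteq> 0 \<Longrightarrow> length v = i"
  by (metis shom_def)

lemma smul_trunc_right_homogeneous:
  assumes "shom i a = a"
  shows "smul a (trunc k b) = trunc (i + k) (smul a b)"
proof (rule ext)
  fix w
  have "a (take j w) * trunc k b (drop j w)
      = (if length w \<le> i + k then a (take j w) * b (drop j w) else 0)" if "j \<le> length w" for j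
    using shom_fixed_length[OF assms, of "take j w"] that
    by (cases "a (take j w) = 0") (auto simp: trunc_apply)
  then show "smul a (trunc k b) w = trunc (i + k) (smul a b) w"
    by (simp add: smul_def trunc_apply)
qed

lemma smul_trunc_left_homogeneous:
  assumes "shom i a = a"
  shows "smul (trunc k b) a = trunc (k + i) (smul b a)"
proof (rule ext)
  fix w
  have "trunc k b (take j w) * a (drop j w)
      = (if length w \<le> k + i then b (take j w) * a (drop j w) else 0)" if "j \<le> length w" for j
    using shom_fixed_length[OF assms, of "drop j w"] that
    by (cases "a (drop j w) = 0") (auto simp: trunc_apply)
  then show "smul (trunc k b) a w = trunc (k + i) (smul b a) w"
    by (simp add: smul_def trunc_apply)
qed

lemma sbr_sgen_trunc: "sbr (sgen g) (trunc k u) = trunc (Suc k) (sbr (sgen g) u)"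
  using smul_trunc_right_homogeneous[OF shom_sgen, where k=k and b=u]
    smul_trunc_left_homogeneous[OF shom_sgen, where k=k and b=u]
  by (simp add: sbr_def trunc_ssub)

text \<open>The derivation of the completed free associative algebra sending each generator g to
  U g. Its coefficient at h # w splits into the terms where the derivation hits the leading
  letter (\<open>sder_head\<close>) and those where it hits the rest of the word, which is h times the
  derivation of the left quotient.\<close>
definition sder_head :: "(gen \<Rightarrow> ser) \<Rightarrow> ser \<Rightarrow> ser" where
  "sder_head U a = sadd (smul (U X) (lquot X a)) (smul (U Y) (lquot Y a))"

primrec sder_word :: "(gen \<Rightarrow> ser) \<Rightarrow> gen list \<Rightarrow> ser \<Rightarrow> complex" where
  "sder_word U [] a = 0"
| "sder_word U (h # w) a = sder_head U a (h # w) + sder_word U w (lquot h a)"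

definition sder :: "(gen \<Rightarrow> ser) \<Rightarrow> ser \<Rightarrow> ser" where
  "sder U a = (\<lambda>w. sder_word U w a)"

lemma sder_head_sadd: "sder_head U (sadd a b) = sadd (sder_head U a) (sder_head U b)"
  unfolding sder_head_def lquot_sadd smul_sadd_right by (rule ext) (simp add: ser_apply)
lemma sder_head_ssc: "sder_head U (ssc c a) = ssc c (sder_head U a)"
  unfolding sder_head_def lquot_ssc smul_ssc_right by (rule ext) (simp add: ser_apply algebra_simps)
lemma sder_head_szero: "sder_head U szero = szero"
  unfolding sder_head_def lquot_szero smul_szero_right by (rule ext) (simp add: ser_apply)

lemma sder_word_sadd: "sder_word U w (sadd a b) = sder_word U w a + sder_word U w b"
  by (induction w arbitrary: a b) (simp_all add: sder_head_sadd lquot_sadd ser_apply)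
lemma sder_word_ssc: "sder_word U w (ssc c a) = c * sder_word U w a"
  by (induction w arbitrary: a) (simp_all add: sder_head_ssc lquot_ssc ser_apply algebra_simps)
lemma sder_word_szero: "sder_word U w szero = 0"
  by (induction w) (simp_all only: sder_word.simps sder_head_szero lquot_szero, simp add: szero_apply)

lemma sder_sadd: "sder U (sadd a b) = sadd (sder U a) (sder U b)"
  by (rule ext) (simp add: sder_def sder_word_sadd ser_apply)
lemma sder_ssc: "sder U (ssc c a) = ssc c (sder U a)"
  by (rule ext) (simp add: sder_def sder_word_ssc ser_apply)
lemma sder_szero: "sder U szero = szero"
  by (rule ext) (simp add: sder_def sder_word_szero ser_apply)

lemma sder_ssub: "sder U (ssub a b) = ssub (sder U a) (sder U b)"
proof -
  have "ssub a b = sadd a (ssc (-1) b)" by (rule ext) (simp add: ser_apply)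
  then show ?thesis by (simp add: sder_sadd sder_ssc) (rule ext, simp add: ser_apply)
qed

lemma sder_head_smul:
  "sder_head U (smul a b) = sadd (smul (sder_head U a) b) (ssc (a []) (sder_head U b))"
  unfolding sder_head_def
  by (rule ext) (simp add: lquot_smul smul_sadd_right smul_sadd_left smul_ssc_right smul_assoc ser_apply,
      simp add: algebra_simps)

lemma sder_Nil: "sder U a [] = 0"
  by (simp add: sder_def)

lemma lquot_sder: "lquot h (sder U a) = sadd (lquot h (sder_head U a)) (sder U (lquot h a))"
  by (rule ext) (simp add: sder_def lquot_apply ser_apply)

lemma sder_smul:
  assumes U0: "\<And>g. U g [] = 0"
  shows "sder U (smul a b) = sadd (smul (sder U a) b) (smul a (sder U b))"
proof (rule ext)
  have head_Nil: "sder_head U a [] = 0" for a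
    by (simp add: sder_head_def smul_Nil U0 ser_apply)
  show "sder U (smul a b) w = sadd (smul (sder U a) b) (smul a (sder U b)) w" for w
  proof (induction w arbitrary: a b)
    case Nil
    then show ?case by (simp add: smul_Nil sder_Nil ser_apply)
  next
    case (Cons h w)
    have tail: "sder U (lquot h (smul a b)) w = smul (sder U (lquot h a)) b w
        + smul (lquot h a) (sder U b) w + a [] * sder U (lquot h b) w"
      by (simp add: lquot_smul sder_sadd sder_ssc Cons.IH ser_apply)
    have head: "sder_head U (smul a b) (h # w)
        = smul (lquot h (sder_head U a)) b w + a [] * sder_head U b (h # w)"
      by (simp add: sder_head_smul smul_Cons head_Nil lquot_apply ser_apply)
    have "sder U (smul a b) (h # w) = sder_head U (smul a b) (h # w) + sder U (lquot h (smul a b)) w"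
      by (simp add: sder_def)
    then show ?case
      unfolding tail head
      by (simp add: smul_Cons sder_Nil lquot_sder smul_sadd_left ser_apply)
        (simp add: sder_def algebra_simps)
  qed
qed

lemma sder_sbr:
  assumes "\<And>g. U g [] = 0"
  shows "sder U (sbr a b) = sadd (sbr (sder U a) b) (sbr a (sder U b))"
  by (rule ext) (simp add: sbr_def sder_ssub sder_smul[of U, OF assms] ser_apply)

lemma sder_word_local:
  assumes U0: "\<And>g. U g [] = 0"
    and agree: "\<And>v. length v \<le> length w \<Longrightarrow> a v = b v"
  shows "sder_word U w a = sder_word U w b"
  using agree
proof (induction w arbitrary: a b)
  case Nil
  then show ?case by simp
next
  case (Cons h w)
  have "smul (U g) (lquot g a) (h # w) = smul (U g) (lquot g b) (h # w)" for g
    unfolding smul_def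
  proof (rule sum.cong[OF refl])
    fix k
    show "U g (take k (h # w)) * lquot g a (drop k (h # w))
        = U g (take k (h # w)) * lquot g b (drop k (h # w))"
      using U0 Cons.prems by (cases k) (simp_all add: lquot_apply)
  qed
  then have "sder_head U a (h # w) = sder_head U b (h # w)"
    by (simp add: sder_head_def sadd_apply)
  moreover have "sder_word U w (lquot h a) = sder_word U w (lquot h b)"
    using Cons.prems by (intro Cons.IH) (simp add: lquot_apply)
  ultimately show ?case by simp
qed

lemma sder_trunc:
  assumes "\<And>g. U g [] = 0" and "m \<le> k"
  shows "trunc m (sder U (trunc k a)) = trunc m (sder U a)"
  using assms
  by (intro ext) (auto simp: trunc_apply sder_def intro: sder_word_local)

lemma sder_sone: "sder U sone = szero"
proof (rule ext)
  have "lquot g sone = szero" for g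
    by (rule ext) (simp add: lquot_apply sone_def szero_apply)
  then show "sder U sone w = szero w" for w
    by (cases w) (simp_all add: sder_def sder_head_def sder_word_szero smul_szero_right ser_apply)
qed

lemma sder_sgen:
  assumes U0: "\<And>g. U g [] = 0"
  shows "sder U (sgen g) = U g"
proof (rule ext)
  fix w
  have lquot_sgen: "lquot h (sgen g') = (if h = g' then sone else szero)" for h g'
    by (rule ext) (auto simp: lquot_apply sgen_def sone_def szero_apply)
  have "sder_word U v sone = 0" for v
    using fun_cong[OF sder_sone[of U], of v] by (simp add: sder_def szero_apply)
  then show "sder U (sgen g) w = U g w"
    using U0 by (cases w; cases g)
      (simp_all add: sder_def sder_head_def lquot_sgen smul_sone_right smul_szero_right
        sder_word_szero ser_apply)
qed

definition ssum :: "'i set \<Rightarrow> ('i \<Rightarrow> ser) \<Rightarrow> ser" where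
  "ssum I f = (\<lambda>w. \<Sum>i\<in>I. f i w)"

lemma ssum_closed:
  assumes "finite I" "szero \<in> S" "\<And>a b. a \<in> S \<Longrightarrow> b \<in> S \<Longrightarrow> sadd a b \<in> S"
    and "\<And>i. i \<in> I \<Longrightarrow> f i \<in> S"
  shows "ssum I f \<in> S"
  using assms(1,4)
proof (induction I rule: finite_induct)
  case empty
  have "ssum {} f = szero" by (rule ext) (simp add: ssum_def szero_apply)
  then show ?case using assms(2) by simp
next
  case (insert i I)
  have "ssum (insert i I) f = sadd (f i) (ssum I f)"
    using insert.hyps by (intro ext) (simp add: ssum_def sadd_apply)
  then show ?case using insert assms(3) by simp
qed

lemma trunc_eq_ssum_shom: "trunc m a = ssum {..m} (\<lambda>j. shom j a)"
  by (rule ext) (simp add: ssum_def shom_def trunc_apply sum.delta'[where a="length _"]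
      eq_commute[of _ "length _"] cong: if_cong)

lemma smul_shom_eq_0:
  assumes "length w \<noteq> i + l"
  shows "smul (shom i a) (shom l b) w = 0"
  unfolding smul_def shom_def using assms by (intro sum.neutral) auto

lemma shom_smul: "shom j (smul a b) = ssum {..j} (\<lambda>i. smul (shom i a) (shom (j - i) b))"
proof (rule ext)
  fix w
  show "shom j (smul a b) w = ssum {..j} (\<lambda>i. smul (shom i a) (shom (j - i) b)) w"
  proof (cases "length w = j")
    case True
    have "ssum {..j} (\<lambda>i. smul (shom i a) (shom (j - i) b)) w
        = (\<Sum>i\<le>j. \<Sum>k\<le>length w. if i = k then a (take k w) * b (drop k w) else 0)"
      unfolding ssum_def smul_def shom_def using True by (intro sum.cong refl) auto
    also have "\<dots> = (\<Sum>k\<le>length w. a (take k w) * b (drop k w))"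
      using True by (subst sum.swap) simp
    finally show ?thesis using True by (simp add: shom_def smul_def)
  next
    case False
    then have "smul (shom i a) (shom (j - i) b) w = 0" if "i \<le> j" for i
      using that by (intro smul_shom_eq_0) auto
    then show ?thesis using False by (simp add: ssum_def shom_def[of j])
  qed
qed

lemma shom_sbr: "shom j (sbr a b) = ssum {..j} (\<lambda>i. sbr (shom i a) (shom (j - i) b))"
proof -
  have "(\<Sum>i\<le>j. smul (shom i b) (shom (j - i) a) w) = (\<Sum>i\<le>j. smul (shom (j - i) b) (shom i a) w)"
    for w by (rule sum.reindex_bij_witness[where i="\<lambda>i. j - i" and j="\<lambda>i. j - i"]) auto
  then have swap: "shom j (smul b a) = ssum {..j} (\<lambda>i. smul (shom (j - i) b) (shom i a))"
    unfolding shom_smul ssum_def by simp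
  have "shom j (sbr a b) = ssub (shom j (smul a b)) (shom j (smul b a))"
    by (rule ext) (simp add: shom_def sbr_def ssub_apply)
  also have "\<dots> = ssum {..j} (\<lambda>i. sbr (shom i a) (shom (j - i) b))"
    unfolding swap shom_smul[of j a b] by (rule ext) (simp add: ssum_def sbr_def ssub_apply sum_subtractf)
  finally show ?thesis .
qed

lemma trunc_sbr_shom:
  assumes "i + l \<le> m"
  shows "trunc m (sbr (shom i a) (shom l b)) = sbr (shom i a) (shom l b)"
  using assms smul_shom_eq_0[of _ i l a b] smul_shom_eq_0[of _ l i b a]
  by (intro ext) (auto simp: trunc_apply sbr_def ssub_apply)

lemma liepoly_szero: "szero \<in> liepoly"
proof -
  have "ssc 0 (sgen X) = szero" by (rule ext) (simp add: ser_apply)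
  then show ?thesis using liepoly.scal[OF liepoly.gen[of X], of 0] by simp
qed

lemma liepoly_ssum: "finite I \<Longrightarrow> (\<And>i. i \<in> I \<Longrightarrow> f i \<in> liepoly) \<Longrightarrow> ssum I f \<in> liepoly"
  by (rule ssum_closed) (auto intro: liepoly_szero liepoly.add)

lemma shom_liepoly: "a \<in> liepoly \<Longrightarrow> shom j a \<in> liepoly"
proof (induction a arbitrary: j rule: liepoly.induct)
  case (gen g)
  have "shom j (sgen g) = (if j = 1 then sgen g else szero)"
    by (rule ext) (auto simp: shom_def sgen_def szero_apply)
  then show ?case by (simp add: liepoly.gen liepoly_szero)
next
  case (add a b) then show ?case by (simp add: shom_sadd liepoly.add)
next
  case (scal a c) then show ?case by (simp add: shom_ssc liepoly.scal)
next
  case (br a b)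
  then show ?case by (simp add: shom_sbr liepoly_ssum liepoly.br)
qed

lemma trunc_liepoly: "a \<in> liepoly \<Longrightarrow> trunc m a \<in> liepoly"
  by (simp add: trunc_eq_ssum_shom liepoly_ssum shom_liepoly)

lemma L_le_iff: "a \<in> L_le n \<longleftrightarrow> a \<in> liepoly \<and> trunc n a = a"
  unfolding L_le_def trunc_def by (auto simp: fun_eq_iff)

lemma L_le_liepoly: "f \<in> L_le m \<Longrightarrow> f \<in> liepoly"
  by (simp add: L_le_def)

lemma trunc_L_le: "a \<in> liepoly \<Longrightarrow> trunc n a \<in> L_le n"
  by (simp add: L_le_iff trunc_liepoly trunc_trunc)

lemma L_le_mono: "m \<le> n \<Longrightarrow> a \<in> L_le m \<Longrightarrow> a \<in> L_le n"
  unfolding L_le_def by auto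

lemma L_le_szero: "szero \<in> L_le m"
  by (simp add: L_le_def liepoly_szero szero_apply)

lemma sgen_L_le: "1 \<le> m \<Longrightarrow> sgen g \<in> L_le m"
  by (simp add: L_le_iff liepoly.gen trunc_sgen)

lemma L_le_sadd: "f \<in> L_le m \<Longrightarrow> g \<in> L_le m \<Longrightarrow> sadd f g \<in> L_le m"
  unfolding L_le_def by (auto simp: liepoly.add sadd_apply)

lemma L_le_ssc: "f \<in> L_le m \<Longrightarrow> ssc c f \<in> L_le m"
  unfolding L_le_def by (auto simp: liepoly.scal ssc_apply)

lemma comm_sub_trunc: "c \<in> comm_sub n \<Longrightarrow> m \<le> n \<Longrightarrow> trunc m c \<in> comm_sub m"
proof (induction c rule: comm_sub.induct)
  case zero then show ?case by (simp add: trunc_szero comm_sub.zero)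
next
  case (comm p q) then show ?case by (simp add: trunc_trunc min_absorb1 comm_sub.comm)
next
  case (add a b) then show ?case by (simp add: trunc_sadd comm_sub.add)
next
  case (scal a c) then show ?case by (simp add: trunc_ssc comm_sub.scal)
qed

text \<open>A truncated commutator is the sum of the commutators of homogeneous components of
  total degree at most the truncation degree, and these are fixed by any larger truncation.\<close>
lemma comm_sub_mono: "c \<in> comm_sub k \<Longrightarrow> k \<le> m \<Longrightarrow> c \<in> comm_sub m"
proof (induction c rule: comm_sub.induct)
  case zero then show ?case by (simp add: comm_sub.zero)
next
  case (comm p q)
  have "sbr (shom i p) (shom (j - i) q) \<in> comm_sub m" if "j \<le> k" "i \<le> j" for i j
    using that comm.prems trunc_sbr_shom[of i "j - i" m p q] comm_sub.comm[of m]
    by (metis le_add_diff_inverse le_trans)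
  then have "ssum {..k} (\<lambda>j. ssum {..j} (\<lambda>i. sbr (shom i p) (shom (j - i) q))) \<in> comm_sub m"
    by (intro ssum_closed) (auto intro: comm_sub.zero comm_sub.add)
  then show ?case by (simp add: trunc_eq_ssum_shom shom_sbr)
next
  case (add a b) then show ?case by (simp add: comm_sub.add)
next
  case (scal a c) then show ?case by (simp add: comm_sub.scal)
qed

fun tang_gen :: "ser \<Rightarrow> ser \<Rightarrow> gen \<Rightarrow> ser" where
  "tang_gen u1 u2 X = sbr (sgen X) u1"
| "tang_gen u1 u2 Y = sbr (sgen Y) u2"

lemma tang_gen_Nil: "tang_gen u1 u2 g [] = 0"
  by (cases g) (simp_all add: sbr_def smul_Nil sgen_def ssub_apply)

lemma sder_tang_gen_sgen: "sder (tang_gen u1 u2) (sgen g) = tang_gen u1 u2 g"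
  by (rule sder_sgen) (rule tang_gen_Nil)

lemma sder_tang_gen_sbr:
  "sder (tang_gen u1 u2) (sbr a b)
    = sadd (sbr (sder (tang_gen u1 u2) a) b) (sbr a (sder (tang_gen u1 u2) b))"
  by (rule sder_sbr) (rule tang_gen_Nil)

lemma sder_tang_gen_trunc:
  "m \<le> k \<Longrightarrow> trunc m (sder (tang_gen u1 u2) (trunc k a)) = trunc m (sder (tang_gen u1 u2) a)"
  by (rule sder_trunc) (rule tang_gen_Nil)

lemma sder_tang_gen_liepoly:
  assumes "u1 \<in> liepoly" "u2 \<in> liepoly"
  shows "a \<in> liepoly \<Longrightarrow> sder (tang_gen u1 u2) a \<in> liepoly"
proof (induction a rule: liepoly.induct)
  case (gen g)
  then show ?case
    using assms by (cases g) (simp_all add: sder_tang_gen_sgen liepoly.br liepoly.gen)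
next
  case (add a b) then show ?case by (simp add: sder_sadd liepoly.add)
next
  case (scal a c) then show ?case by (simp add: sder_ssc liepoly.scal)
next
  case (br a b) then show ?case by (simp add: sder_tang_gen_sbr liepoly.add liepoly.br)
qed

definition tang_der :: "nat \<Rightarrow> ser \<Rightarrow> ser \<Rightarrow> ser \<Rightarrow> ser" where
  "tang_der m u1 u2 f = (if f \<in> L_le m then trunc m (sder (tang_gen u1 u2) f) else szero)"

lemma tang_der_L_le:
  assumes "u1 \<in> liepoly" "u2 \<in> liepoly"
  shows "tang_der m u1 u2 f \<in> L_le m"
  using assms by (simp add: tang_der_def L_le_szero trunc_L_le sder_tang_gen_liepoly L_le_liepoly)

lemma tang_der_szero: "tang_der m u1 u2 szero = szero"
  by (simp add: tang_der_def L_le_szero sder_szero trunc_szero)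

lemma tang_der_tder:
  assumes m: "1 \<le> m" and u: "u1 \<in> liepoly" "u2 \<in> liepoly"
  shows "tang_der m u1 u2 \<in> tder m" "is_tang m (tang_der m u1 u2) (trunc m u1) (trunc m u2)"
proof -
  let ?U = "tang_gen u1 u2"
  show tang: "is_tang m (tang_der m u1 u2) (trunc m u1) (trunc m u2)"
    using u m by (simp add: is_tang_def tang_der_def trunc_L_le sgen_L_le sder_tang_gen_sgen
        trunc_sbr_right)
  have Leibniz: "tang_der m u1 u2 (trunc m (sbr f g))
      = trunc m (sadd (sbr (tang_der m u1 u2 f) g) (sbr f (tang_der m u1 u2 g)))"
    if "f \<in> L_le m" "g \<in> L_le m" for f g
  proof -
    have "tang_der m u1 u2 (trunc m (sbr f g)) = trunc m (sder ?U (sbr f g))"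
      using that by (simp add: tang_der_def trunc_L_le liepoly.br L_le_liepoly sder_tang_gen_trunc)
    also have "\<dots> = trunc m (sadd (sbr (tang_der m u1 u2 f) g) (sbr f (tang_der m u1 u2 g)))"
      using that by (simp add: sder_tang_gen_sbr tang_der_def trunc_sadd trunc_sbr_left trunc_sbr_right)
    finally show ?thesis .
  qed
  have add: "tang_der m u1 u2 (sadd f g) = sadd (tang_der m u1 u2 f) (tang_der m u1 u2 g)"
    if "f \<in> L_le m" "g \<in> L_le m" for f g
    using that by (simp add: tang_der_def L_le_sadd sder_sadd trunc_sadd)
  have scal: "tang_der m u1 u2 (ssc c f) = ssc c (tang_der m u1 u2 f)" if "f \<in> L_le m" for c f
    using that by (simp add: tang_der_def L_le_ssc sder_ssc trunc_ssc)
  have outside: "tang_der m u1 u2 f = szero" if "f \<notin> L_le m" for f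
    using that by (simp add: tang_der_def)
  show "tang_der m u1 u2 \<in> tder m"
    unfolding tder_def using tang Leibniz add scal outside tang_der_L_le[OF u] by blast
qed

lemma tder_trunc_eq_sder:
  assumes m: "1 \<le> m" and D: "D \<in> tder m" and t: "is_tang m D u1 u2"
  shows "a \<in> liepoly \<Longrightarrow> D (trunc m a) = trunc m (sder (tang_gen u1 u2) a)"
proof (induction a rule: liepoly.induct)
  case (gen g)
  then show ?case
    using t m by (cases g) (simp_all add: is_tang_def trunc_sgen sder_tang_gen_sgen)
next
  case (add a b)
  then show ?case
    using D by (simp add: tder_def trunc_sadd trunc_L_le sder_sadd)
next
  case (scal a c)
  then show ?case
    using D by (simp add: tder_def trunc_ssc trunc_L_le sder_ssc)
next
  case (br a b)
  have "D (trunc m (sbr a b)) = D (trunc m (sbr (trunc m a) (trunc m b)))"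
    by (simp add: trunc_sbr)
  also have "\<dots> = trunc m (sadd (sbr (D (trunc m a)) (trunc m b)) (sbr (trunc m a) (D (trunc m b))))"
    using D br.hyps by (simp add: tder_def trunc_L_le)
  also have "\<dots> = trunc m (sder (tang_gen u1 u2) (sbr a b))"
    by (simp add: br.IH trunc_sadd trunc_sbr_left trunc_sbr_right sder_tang_gen_sbr)
  finally show ?case .
qed

lemma tder_eq_tang_der:
  assumes "1 \<le> m" "D \<in> tder m" "is_tang m D u1 u2"
  shows "D = tang_der m u1 u2"
proof (rule ext)
  fix f
  show "D f = tang_der m u1 u2 f"
  proof (cases "f \<in> L_le m")
    case True
    then show ?thesis
      using tder_trunc_eq_sder[OF assms, of f] by (simp add: L_le_iff tang_der_def)
  next
    case False
    then show ?thesis using assms(2) by (simp add: tder_def tang_der_def)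
  qed
qed

lemma tder_imp_tang_der:
  assumes "1 \<le> m" "D \<in> tder m"
  obtains u1 u2 where "u1 \<in> liepoly" "u2 \<in> liepoly" "D = tang_der m u1 u2"
proof -
  obtain u1 u2 where t: "is_tang m D u1 u2"
    using assms(2) by (auto simp: tder_def)
  then have "u1 \<in> liepoly" "u2 \<in> liepoly"
    by (auto simp: is_tang_def L_le_liepoly)
  then show thesis using that tder_eq_tang_der[OF assms t] by blast
qed

lemma tang_der_trunc:
  assumes m: "1 \<le> m" and u: "u1 \<in> liepoly" "u2 \<in> liepoly"
  shows "tang_der m (trunc (m - 1) u1) (trunc (m - 1) u2) = tang_der m u1 u2"
proof -
  have Suc: "Suc (m - 1) = m" using m by simp
  have "is_tang m (tang_der m u1 u2) (trunc (m - 1) u1) (trunc (m - 1) u2)"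
    using tang_der_tder(2)[OF m u] u
    by (simp add: is_tang_def sbr_sgen_trunc Suc trunc_trunc trunc_sbr_right
        L_le_mono[OF _ trunc_L_le])
  then show ?thesis
    using tder_eq_tang_der[OF m tang_der_tder(1)[OF m u]] by simp
qed

lemma tang_der_x_plus_y:
  "1 \<le> m \<Longrightarrow> tang_der m u1 u2 (sadd (sgen X) (sgen Y))
    = trunc m (sadd (sbr (sgen X) u1) (sbr (sgen Y) u2))"
  by (simp add: tang_der_def L_le_sadd sgen_L_le sder_sadd sder_tang_gen_sgen)

lemma proj_tang_der: "m \<le> n \<Longrightarrow> proj m (tang_der n u1 u2) = tang_der m u1 u2"
  by (rule ext) (simp add: proj_def tang_der_def L_le_mono trunc_trunc min_absorb1)

lemma proj_dadd: "proj n (dadd D E) = dadd (proj n D) (proj n E)"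
  by (rule ext) (simp add: proj_def dadd_def trunc_sadd fun_eq_iff ser_apply)

lemma proj_dsc: "proj n (dsc c D) = dsc c (proj n D)"
  by (rule ext) (simp add: proj_def dsc_def trunc_ssc fun_eq_iff ser_apply)

lemma trunc_tang_der_tang_der:
  assumes "m \<le> n" "b1 \<in> liepoly" "b2 \<in> liepoly" "f \<in> L_le m"
  shows "trunc m (tang_der n a1 a2 (tang_der n b1 b2 f)) = tang_der m a1 a2 (tang_der m b1 b2 f)"
proof -
  have f: "f \<in> L_le n" using assms(1,4) by (rule L_le_mono)
  have "trunc m (tang_der n a1 a2 (tang_der n b1 b2 f))
      = trunc m (sder (tang_gen a1 a2) (sder (tang_gen b1 b2) f))"
    using assms f tang_der_L_le[of b1 b2 n f]
    by (simp add: tang_der_def[of n a1 a2] tang_der_def[of n b1 b2] trunc_trunc min_absorb1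
        sder_tang_gen_trunc)
  also have "\<dots> = tang_der m a1 a2 (tang_der m b1 b2 f)"
    using assms tang_der_L_le[of b1 b2 m f]
    by (simp add: tang_der_def[of m a1 a2] tang_der_def[of m b1 b2] sder_tang_gen_trunc)
  finally show ?thesis .
qed

lemma proj_dcomm:
  assumes "1 \<le> n" "m \<le> n" "D \<in> tder n" "E \<in> tder n"
  shows "proj m (dcomm D E) = dcomm (proj m D) (proj m E)"
proof -
  obtain a1 a2 where a: "a1 \<in> liepoly" "a2 \<in> liepoly" "D = tang_der n a1 a2"
    using tder_imp_tang_der[OF assms(1,3)] .
  obtain b1 b2 where b: "b1 \<in> liepoly" "b2 \<in> liepoly" "E = tang_der n b1 b2"
    using tder_imp_tang_der[OF assms(1,4)] .
  show ?thesis
  proof (rule ext)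
    fix f
    show "proj m (dcomm D E) f = dcomm (proj m D) (proj m E) f"
    proof (cases "f \<in> L_le m")
      case True
      then have "proj m (dcomm D E) f = ssub (trunc m (D (E f))) (trunc m (E (D f)))"
        by (simp add: proj_def dcomm_def trunc_ssub)
      then show ?thesis
        using True a b assms(2) by (simp add: dcomm_def proj_tang_der trunc_tang_der_tang_der)
    next
      case False
      have "ssub szero szero = szero" by (rule ext) (simp add: ser_apply)
      then show ?thesis
        using False a b assms(2)
        by (simp add: proj_def dcomm_def proj_tang_der tang_der_def[of m _ _ f] tang_der_szero
            trunc_szero)
    qed
  qed
qed

lemma smul_dpart_sgen_local:
  assumes "u w = u' w"
  shows "smul (dpart g u) (sgen g) w = smul (dpart g u') (sgen g) w"
  unfolding smul_def
proof (rule sum.cong[OF refl])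
  fix k
  show "dpart g u (take k w) * sgen g (drop k w) = dpart g u' (take k w) * sgen g (drop k w)"
  proof (cases "drop k w = [g]")
    case True
    then have "take k w @ [g] = w" by (metis append_take_drop_id)
    then show ?thesis using assms by (simp add: dpart_def)
  qed (simp add: sgen_def)
qed

lemma jdiv_local:
  assumes "u1 w = u1' w" "u2 w = u2' w"
  shows "jdiv u1 u2 w = jdiv u1' u2' w"
  using smul_dpart_sgen_local[of u1 w u1' X, OF assms(1)] smul_dpart_sgen_local[of u2 w u2' Y, OF assms(2)]
  by (simp add: jdiv_def sadd_apply)

lemma jdiv_trunc: "jdiv (trunc k u1) (trunc k u2) = trunc k (jdiv u1 u2)"
proof (rule ext)
  fix w
  have "dpart g szero = szero" for g
    by (rule ext) (simp add: dpart_def szero_apply)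
  then have "jdiv szero szero = szero"
    by (simp add: jdiv_def smul_szero_left) (rule ext, simp add: ser_apply)
  then show "jdiv (trunc k u1) (trunc k u2) w = trunc k (jdiv u1 u2) w"
    using jdiv_local[of "trunc k u1" w u1 "trunc k u2" u2]
      jdiv_local[of "trunc k u1" w szero "trunc k u2" szero]
    by (simp add: trunc_apply szero_apply)
qed

lemma spow_homogeneous:
  assumes "shom 1 s = s" and "spow s k w \<noteq> 0"
  shows "length w = k"
  using assms(2)
proof (induction k arbitrary: w)
  case 0
  then show ?case by (simp add: sone_def split: if_splits)
next
  case (Suc k)
  from Suc.prems have "(\<Sum>j\<le>length w. s (take j w) * spow s k (drop j w)) \<noteq> 0"
    by (simp add: smul_def)
  then obtain j where "j \<le> length w" "s (take j w) * spow s k (drop j w) \<noteq> 0"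
    by (meson atMost_iff sum.not_neutral_contains_not_neutral)
  then have "length (take j w) = 1" "length (drop j w) = k"
    using shom_fixed_length[OF assms(1), of "take j w"] Suc.IH[of "drop j w"] by auto
  then show ?case by simp
qed

lemma reval_homogeneous:
  assumes "shom 1 s = s"
  shows "reval n r s w = (if length w \<le> n then r (length w) * spow s (length w) w else 0)"
proof -
  have "reval n r s w = (\<Sum>k\<le>n. if k = length w then r k * spow s k w else 0)"
    unfolding reval_def using spow_homogeneous[OF assms] by (intro sum.cong refl) auto
  then show ?thesis by simp
qed

text \<open>The untruncated series r(x+y) - r(x) - r(y): only the term of r of degree |w|
  contributes to the coefficient of a word w.\<close>
definition rdefect :: "(nat \<Rightarrow> complex) \<Rightarrow> ser" where
  "rdefect r = (\<lambda>w. r (length w) * (spow (sadd (sgen X) (sgen Y)) (length w) w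
      - spow (sgen X) (length w) w - spow (sgen Y) (length w) w))"

lemma reval_defect:
  "ssub (ssub (reval n r (sadd (sgen X) (sgen Y))) (reval n r (sgen X))) (reval n r (sgen Y))
    = trunc n (rdefect r)"
proof (rule ext)
  fix w
  have "shom 1 (sadd (sgen X) (sgen Y)) = sadd (sgen X) (sgen Y)"
    by (simp only: shom_sadd shom_sgen)
  note reval = reval_homogeneous[OF this] reval_homogeneous[OF shom_sgen]
  show "ssub (ssub (reval n r (sadd (sgen X) (sgen Y))) (reval n r (sgen X))) (reval n r (sgen Y)) w
      = trunc n (rdefect r) w"
    unfolding ssub_apply reval by (simp add: trunc_apply rdefect_def algebra_simps)
qed

lemma rdefect_cutoff: "rdefect (\<lambda>k. if k \<le> m then r k else 0) = trunc m (rdefect r)"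
  by (rule ext) (simp add: rdefect_def trunc_apply)

lemma mem_krv_iff:
  assumes m: "1 \<le> m"
  shows "D \<in> krv m \<longleftrightarrow> (\<exists>u1 u2 r. u1 \<in> liepoly \<and> u2 \<in> liepoly \<and> D = tang_der m u1 u2 \<and>
    D (sadd (sgen X) (sgen Y)) = szero \<and> trunc m (ssub (jdiv u1 u2) (rdefect r)) \<in> comm_sub m)"
proof -
  have cyc: "cyc_eq m (jdiv u1 u2) (ssub (ssub (reval m r (sadd (sgen X) (sgen Y)))
      (reval m r (sgen X))) (reval m r (sgen Y)))
    \<longleftrightarrow> trunc m (ssub (jdiv u1 u2) (rdefect r)) \<in> comm_sub m" for u1 u2 r
    by (simp add: cyc_eq_def reval_defect trunc_ssub trunc_trunc)
  show ?thesis
  proof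
    assume "D \<in> krv m"
    then obtain u1 u2 r where D: "D \<in> tder m" and t: "is_tang m D u1 u2"
      and "D (sadd (sgen X) (sgen Y)) = szero" "trunc m (ssub (jdiv u1 u2) (rdefect r)) \<in> comm_sub m"
      by (auto simp: krv_def cyc)
    moreover have "u1 \<in> liepoly" "u2 \<in> liepoly"
      using t by (auto simp: is_tang_def L_le_liepoly)
    moreover have "D = tang_der m u1 u2"
      using tder_eq_tang_der[OF m D t] .
    ultimately show "\<exists>u1 u2 r. u1 \<in> liepoly \<and> u2 \<in> liepoly \<and> D = tang_der m u1 u2 \<and>
      D (sadd (sgen X) (sgen Y)) = szero \<and> trunc m (ssub (jdiv u1 u2) (rdefect r)) \<in> comm_sub m"
      by blast
  next
    assume "\<exists>u1 u2 r. u1 \<in> liepoly \<and> u2 \<in> liepoly \<and> D = tang_der m u1 u2 \<and>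
      D (sadd (sgen X) (sgen Y)) = szero \<and> trunc m (ssub (jdiv u1 u2) (rdefect r)) \<in> comm_sub m"
    then obtain u1 u2 r where u: "u1 \<in> liepoly" "u2 \<in> liepoly" and D: "D = tang_der m u1 u2"
      and xy: "D (sadd (sgen X) (sgen Y)) = szero"
      and div: "trunc m (ssub (jdiv u1 u2) (rdefect r)) \<in> comm_sub m"
      by blast
    have "trunc m (ssub (jdiv (trunc m u1) (trunc m u2)) (rdefect r))
        = trunc m (ssub (jdiv u1 u2) (rdefect r))"
      by (simp add: jdiv_trunc trunc_ssub trunc_trunc)
    with div have "cyc_eq m (jdiv (trunc m u1) (trunc m u2))
        (ssub (ssub (reval m r (sadd (sgen X) (sgen Y))) (reval m r (sgen X))) (reval m r (sgen Y)))"
      by (simp add: cyc)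
    moreover have "D \<in> tder m" "is_tang m D (trunc m u1) (trunc m u2)"
      using tang_der_tder[OF m u] by (simp_all add: D)
    ultimately show "D \<in> krv m"
      using xy unfolding krv_def by blast
  qed
qed

lemma proj_krv:
  assumes n: "1 \<le> n" and D: "D \<in> krv (Suc n)"
  shows "proj n D \<in> krv n"
proof -
  obtain u1 u2 r where u: "u1 \<in> liepoly" "u2 \<in> liepoly" and D_eq: "D = tang_der (Suc n) u1 u2"
    and xy: "D (sadd (sgen X) (sgen Y)) = szero"
    and div: "trunc (Suc n) (ssub (jdiv u1 u2) (rdefect r)) \<in> comm_sub (Suc n)"
    using D by (auto simp: mem_krv_iff)
  have "proj n D = tang_der n u1 u2"
    by (simp add: D_eq proj_tang_der)
  moreover have "proj n D (sadd (sgen X) (sgen Y)) = szero"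
    using n xy by (simp add: proj_def L_le_sadd sgen_L_le trunc_szero)
  moreover have "trunc n (ssub (jdiv u1 u2) (rdefect r)) \<in> comm_sub n"
    using comm_sub_trunc[OF div] by (simp add: trunc_trunc)
  ultimately show ?thesis
    using n u by (auto simp: mem_krv_iff)
qed

lemma krv_lift:
  assumes n: "1 \<le> n" and D: "D \<in> krv n"
  shows "D \<in> proj n ` krv (Suc n)"
proof -
  obtain u1 u2 r where u: "u1 \<in> liepoly" "u2 \<in> liepoly" and D_eq: "D = tang_der n u1 u2"
    and xy: "D (sadd (sgen X) (sgen Y)) = szero"
    and div: "trunc n (ssub (jdiv u1 u2) (rdefect r)) \<in> comm_sub n"
    using D n by (auto simp: mem_krv_iff)
  define v1 where "v1 = trunc (n - 1) u1"
  define v2 where "v2 = trunc (n - 1) u2"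
  define E where "E = tang_der (Suc n) v1 v2"
  have v: "v1 \<in> liepoly" "v2 \<in> liepoly"
    using u by (simp_all add: v1_def v2_def trunc_liepoly)
  have "proj n E = D"
    using tang_der_trunc[OF n u] by (simp add: E_def D_eq proj_tang_der v1_def v2_def)
  moreover have "E (sadd (sgen X) (sgen Y)) = szero"
  proof -
    have "E (sadd (sgen X) (sgen Y)) = trunc n (sadd (sbr (sgen X) u1) (sbr (sgen Y) u2))"
      using n by (simp add: E_def tang_der_x_plus_y v1_def v2_def sbr_sgen_trunc trunc_sadd trunc_trunc)
    also have "\<dots> = D (sadd (sgen X) (sgen Y))"
      using n by (simp add: D_eq tang_der_x_plus_y)
    finally show ?thesis using xy by simp
  qed
  moreover have "trunc (Suc n) (ssub (jdiv v1 v2) (rdefect (\<lambda>k. if k \<le> n - 1 then r k else 0)))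
      \<in> comm_sub (Suc n)"
  proof -
    have "trunc (n - 1) (trunc n (ssub (jdiv u1 u2) (rdefect r))) \<in> comm_sub (n - 1)"
      using div by (rule comm_sub_trunc) simp
    then have "trunc (n - 1) (trunc n (ssub (jdiv u1 u2) (rdefect r))) \<in> comm_sub (Suc n)"
      by (rule comm_sub_mono) simp
    then show ?thesis
      by (simp add: v1_def v2_def jdiv_trunc rdefect_cutoff trunc_ssub trunc_trunc)
  qed
  ultimately have "E \<in> krv (Suc n)" "proj n E = D"
    using v by (auto simp: mem_krv_iff E_def)
  then show ?thesis by blast
qed

theorem lemma3p12:
  fixes n :: nat
  assumes "1 \<le> n"
  shows "proj n ` krv (Suc n) = krv n \<and>
    (\<forall>D\<in>krv (Suc n). \<forall>E\<in>krv (Suc n).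
       proj n (dcomm D E) = dcomm (proj n D) (proj n E) \<and>
       proj n (dadd D E) = dadd (proj n D) (proj n E) \<and>
       (\<forall>c. proj n (dsc c D) = dsc c (proj n D)))"
proof -
  have "proj n ` krv (Suc n) = krv n"
    using proj_krv[OF assms] krv_lift[OF assms] by blast
  moreover have "proj n (dcomm D E) = dcomm (proj n D) (proj n E)"
    if "D \<in> krv (Suc n)" "E \<in> krv (Suc n)" for D E
    using that assms by (intro proj_dcomm[of "Suc n"]) (auto simp: krv_def)
  ultimately show ?thesis
    by (simp add: proj_dadd proj_dsc)
qed

end
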